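(* For all $r,t>0$ the function $z\mapsto u(z;r,t)$, $z\in\left[0,\frac{Q(r)P(r)d}{Q(t)P(t)}\right]$, is the profile of a rotationally symmetric hypersurface of constant mean curvature $\eta(t)=\frac{nQ(t)P(t)}{d}$, i.e. $H(u(\cdot;r,t))\equiv\eta(t)$ on this interval, and moreover \[ u_z(0;r,t)=u_z\!\left(\tfrac{Q(r)P(r)d}{Q(t)P(t)};r,t\right)=0 . \]
   Context: Fix an integer $n\ge2$ and $d>0$. Define $Q:(0,\infty)\to\mathbb{R}$ by $Q(t)=\frac{1-t^{n-1}}{1-t^n}$ for $t\neq1$ and $Q(1)=\frac{n-1}{n}$. For $0\le x\le1$, $t>0$ define $R(x;t)=\frac{1}{|1-t|}\sqrt{\left(\frac{(1-(1-t)x)^{n-1}}{1-Q(t)+Q(t)(1-(1-t)x)^n}\right)^2-1}$ for $t\ne1$ and $R(x;1)=\sqrt{(n-1)(1-x)x}$. Let $\zeta(x;t)=\int_x^1R(\tilde x;t)^{-1}\,d\tilde x$ for $0\le x<1$, $\zeta(1;t)=0$, $P(t)=\zeta(0;t)$, and let $\zeta^{-1}(\cdot;t)$ denote the inverse of $x\mapsto\zeta(x;t)$ (so $\zeta^{-1}(\zeta(x;t);t)=x$). For $r,t>0$ and $z\in\left[0,\frac{Q(r)P(r)d}{Q(t)P(t)}\right]$ set $u(z;r,t)=\frac{Q(r)d}{P(t)Q(t)}\left(1-(1-r)\zeta^{-1}\left(\frac{Q(t)P(t)z}{Q(r)d};r\right)\right)$, and let $\eta(t)=\frac{nQ(t)P(t)}{d}$.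 Subscripts denote partial derivatives. For a positive $C^2$ function $f$ of $z$, the mean curvature of the hypersurface of revolution $\{(z,f(z)\theta):\theta\in\mathbb{S}^{n-1}\}\subset\mathbb{R}^{n+1}$ is $H(f)=\frac{-f_{zz}}{(1+f_z^2)^{3/2}}+\frac{n-1}{f\sqrt{1+f_z^2}}$. *)

theory Defs
  imports "HOL-Analysis.Analysis"
begin

definition Qf :: "nat \<Rightarrow> real \<Rightarrow> real" where
  "Qf n t = (if t = 1 then (real n - 1) / real n else (1 - t ^ (n - 1)) / (1 - t ^ n))"

definition Rf :: "nat \<Rightarrow> real \<Rightarrow> real \<Rightarrow> real" where
  "Rf n x t = (if t = 1 then sqrt ((real n - 1) * (1 - x) * x)
     else (1 / \<bar>1 - t\<bar>) * sqrt (((1 - (1 - t) * x) ^ (n - 1)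
              / (1 - Qf n t + Qf n t * (1 - (1 - t) * x) ^ n))\<^sup>2 - 1))"

text \<open>zeta(x;t) = integral from x to 1 of 1/R (improper at the endpoints; HK integral).\<close>
definition zeta :: "nat \<Rightarrow> real \<Rightarrow> real \<Rightarrow> real" where
  "zeta n x t = (if x = 1 then 0 else integral {x..1} (\<lambda>y. 1 / Rf n y t))"

definition Pf :: "nat \<Rightarrow> real \<Rightarrow> real" where
  "Pf n t = zeta n 0 t"

definition zeta_inv :: "nat \<Rightarrow> real \<Rightarrow> real \<Rightarrow> real" where
  "zeta_inv n s t = (THE x. 0 \<le> x \<and> x \<le> 1 \<and> zeta n x t = s)"

definition uf :: "nat \<Rightarrow> real \<Rightarrow> real \<Rightarrow> real \<Rightarrow> real \<Rightarrow> real" where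
  "uf n d z r t = Qf n r * d / (Pf n t * Qf n t)
     * (1 - (1 - r) * zeta_inv n (Qf n t * Pf n t * z / (Qf n r * d)) r)"

definition eta :: "nat \<Rightarrow> real \<Rightarrow> real \<Rightarrow> real" where
  "eta n d t = real n * Qf n t * Pf n t / d"

text \<open>Mean curvature of the hypersurface of revolution with profile value f, f_z = f1, f_zz = f2.\<close>
definition Hcurv :: "nat \<Rightarrow> real \<Rightarrow> real \<Rightarrow> real \<Rightarrow> real" where
  "Hcurv n f f1 f2 = - f2 / (1 + f1\<^sup>2) powr (3/2) + (real n - 1) / (f * sqrt (1 + f1\<^sup>2))"

end

theory Submission
  imports Defs
begin

text \<open>
  Put \<open>s = 1 - (1 - p) x\<close>. The radicand of \<open>R(x;p)\<close> is \<open>W(s)\<^sup>2 - 1\<close> with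
  \<open>W(s) = s\<^sup>n\<^sup>-\<^sup>1 / (1 - Q + Q s\<^sup>n)\<close>, and the numerator of \<open>W(s) - 1\<close> vanishes
  exactly at \<open>s = 1\<close> and \<open>s = p\<close>, i.e. at \<open>x = 0\<close> and \<open>x = 1\<close>. Hence
  \<open>R\<^sup>2 = x (1 - x) K\<close> with \<open>K\<close> continuous and positive on \<open>[0,1]\<close>: \<open>1/R\<close> is integrable
  by comparison with the arcsine density, \<open>\<zeta>\<close> is a decreasing bijection \<open>[0,1] \<rightarrow> [0,P]\<close>,
  and its inverse solves \<open>x' = -R(x)\<close> up to the endpoints, where \<open>R\<close> vanishes.
  The height \<open>h = 1 - (1 - p) \<zeta>\<^sup>-\<^sup>1\<close> then satisfies \<open>h' = \<plusminus>sqrt(W(h)\<^sup>2 - 1)\<close>,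
  so \<open>1 + h'\<^sup>2 = W(h)\<^sup>2\<close> and \<open>h'' = W(h) W'(h)\<close>; substituting into \<open>H\<close> gives the
  constant \<open>n Q / a\<close> for the profile \<open>u(z) = a h(z/a)\<close>, and \<open>u'\<close> vanishes at both ends
  because \<open>R\<close> does.
\<close>

lemma has_real_derivative_within_Icc_of_interior:
  fixes f g :: "real \<Rightarrow> real"
  assumes "a \<le> b" and f: "continuous_on {a..b} f" and g: "continuous_on {a..b} g"
    and deriv: "\<And>x. x \<in> {a<..<b} \<Longrightarrow> (f has_real_derivative g x) (at x)"
    and x: "x \<in> {a..b}"
  shows "(f has_real_derivative g x) (at x within {a..b})"
proof -
  have ftc: "f a + integral {a..y} g = f y" if y: "y \<in> {a..b}" for y
  proof -
    have "(g has_integral (f y - f a)) {a..y}"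
    proof (rule fundamental_theorem_of_calculus_interior)
      show "continuous_on {a..y} f" by (rule continuous_on_subset[OF f]) (use y in auto)
      show "(f has_vector_derivative g z) (at z)" if "z \<in> {a<..<y}" for z
        using deriv[of z] that y by (simp add: has_real_derivative_iff_has_vector_derivative)
    qed (use y in auto)
    then show ?thesis by (simp add: integral_unique)
  qed
  have "((\<lambda>y. f a + integral {a..y} g) has_real_derivative g x) (at x within {a..b})"
    using integral_has_real_derivative[OF g x] by (auto intro!: derivative_eq_intros)
  then show ?thesis
    by (rule has_field_derivative_transform_within[OF _ zero_less_one x]) (simp add: ftc)
qed

lemma DERIV_sqrt_autonomous:
  assumes S: "(S has_real_derivative c * sqrt (G (S w))) (at w)"
    and G: "(G has_real_derivative g) (at (S w))"
    and pos: "G (S w) > 0" and c: "c\<^sup>2 = 1"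
  shows "((\<lambda>w. c * sqrt (G (S w))) has_real_derivative g / 2) (at w)"
proof -
  have "((\<lambda>w. G (S w)) has_real_derivative g * (c * sqrt (G (S w)))) (at w)"
    using DERIV_chain2[OF G S] .
  then have "((\<lambda>w. c * sqrt (G (S w))) has_real_derivative
      c * (inverse (sqrt (G (S w))) / 2 * (g * (c * sqrt (G (S w)))))) (at w)"
    by (intro DERIV_cmult
        DERIV_chain2[where f = sqrt and g = "\<lambda>w. G (S w)", OF DERIV_real_sqrt[OF pos]])
  moreover have "c * (c * g) = g" using c by (simp add: power2_eq_square flip: mult.assoc)
  ultimately show ?thesis using pos by (simp add: field_simps)
qed

lemma DERIV_comp_divide_Icc:
  fixes a P z :: real
  assumes a: "a > 0" and f: "(f has_real_derivative f') (at (z / a) within {0..P})"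
  shows "((\<lambda>z. f (z / a)) has_real_derivative f' / a) (at z within {0..a * P})"
proof -
  have "(f \<circ> (\<lambda>z. z / a) has_real_derivative f' * (1 / a)) (at z within {0..a * P})"
    by (rule DERIV_image_chain) (use a f in \<open>auto intro!: derivative_eq_intros\<close>)
  then show ?thesis by (simp add: o_def)
qed

lemma integrable_inverse_sqrt_arcsine: "(\<lambda>y::real. 1 / sqrt (y * (1 - y))) integrable_on {0..1}"
proof -
  have "((\<lambda>y::real. 1 / sqrt (y * (1 - y)))
      has_integral (arcsin (2*1 - 1) - arcsin (2*0 - 1))) {0..1}"
  proof (rule fundamental_theorem_of_calculus_interior)
    fix y :: real assume y: "y \<in> {0<..<1}"
    have "1 - (2*y - 1)^2 = 4 * (y * (1 - y))" by (simp add: algebra_simps power2_eq_square)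
    then have "sqrt (1 - (2*y - 1)^2) = 2 * sqrt (y * (1 - y))" by (simp add: real_sqrt_mult)
    moreover have "((\<lambda>y. arcsin (2*y - 1))
        has_real_derivative inverse (sqrt (1 - (2*y - 1)^2)) * 2) (at y)"
      using y by (auto intro!: derivative_eq_intros DERIV_arcsin[THEN DERIV_chain2])
    ultimately show "((\<lambda>y. arcsin (2*y - 1)) has_vector_derivative 1 / sqrt (y * (1 - y))) (at y)"
      by (simp add: has_real_derivative_iff_has_vector_derivative field_simps)
  qed (auto intro!: continuous_intros)
  then show ?thesis by blast
qed

locale sqrt_quadrature =
  fixes K :: "real \<Rightarrow> real"
  assumes K_cont: "continuous_on {0..1} K"
    and K_pos: "\<And>x. x \<in> {0..1} \<Longrightarrow> K x > 0"
begin

definition speed :: "real \<Rightarrow> real" where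
  "speed x = sqrt (x * (1 - x) * K x)"

definition quad :: "real \<Rightarrow> real" where
  "quad x = integral {x..1} (\<lambda>y. 1 / speed y)"

lemma speed_cont: "continuous_on {0..1} speed"
  unfolding speed_def[abs_def] by (intro continuous_intros K_cont)

lemma speed_pos: "x \<in> {0<..<1} \<Longrightarrow> speed x > 0"
  using K_pos[of x] by (simp add: speed_def)

lemma speed_0 [simp]: "speed 0 = 0" and speed_1 [simp]: "speed 1 = 0"
  by (simp_all add: speed_def)

lemma integrable_inverse_speed: "(\<lambda>y. 1 / speed y) integrable_on {0..1}"
proof -
  obtain x0 where x0: "x0 \<in> {0..1}" "\<And>x. x \<in> {0..1} \<Longrightarrow> K x0 \<le> K x"
    using continuous_attains_inf[OF compact_Icc _ K_cont] by auto
  define c where "c = K x0"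
  have c: "c > 0" "\<And>x. x \<in> {0..1} \<Longrightarrow> c \<le> K x"
    using K_pos[OF x0(1)] x0(2) by (auto simp: c_def)
  have bound: "\<bar>1 / speed y\<bar> \<le> (1 / sqrt c) *\<^sub>R (1 / sqrt (y * (1 - y)))"
    if y: "y \<in> {0<..<1}" for y
  proof -
    have "c * (y * (1 - y)) \<le> y * (1 - y) * K y"
      using c(2)[of y] y by (simp add: mult.commute mult_right_mono)
    then have "sqrt c * sqrt (y * (1 - y)) \<le> speed y"
      unfolding speed_def by (simp add: real_sqrt_mult[symmetric])
    then show ?thesis
      using c(1) y speed_pos[OF y] by (simp add: frac_le)
  qed
  have "continuous_on {0<..<1} (\<lambda>y. 1 / speed y)"
    by (intro continuous_intros continuous_on_subset[OF speed_cont])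
      (auto dest: speed_pos)
  then have "(\<lambda>y. 1 / speed y) \<in> borel_measurable (lebesgue_on {0<..<1})"
    by (rule continuous_imp_measurable_on_sets_lebesgue) auto
  moreover have "(\<lambda>y. (1 / sqrt c) *\<^sub>R (1 / sqrt (y * (1 - y)))) integrable_on {0<..<1}"
    using integrable_cmul[OF integrable_inverse_sqrt_arcsine] integrable_on_Icc_iff_Ioo by blast
  ultimately have "(\<lambda>y. 1 / speed y) integrable_on {0<..<1}"
    by (rule measurable_bounded_by_integrable_imp_integrable_real[OF _ _ bound]) auto
  then show ?thesis using integrable_on_Icc_iff_Ioo by blast
qed

lemma quad_cont: "continuous_on {0..1} quad"
  unfolding quad_def[abs_def]
  by (rule indefinite_integral_continuous_1'[OF integrable_inverse_speed])

lemma quad_1 [simp]: "quad 1 = 0"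
  by (simp add: quad_def)

lemma quad_deriv:
  assumes x: "x \<in> {0<..<1}"
  shows "(quad has_real_derivative - (1 / speed x)) (at x)"
proof -
  define a b where "a = x / 2" and "b = (x + 1) / 2"
  have ab: "0 < a" "a < x" "x < b" "b < 1" using x by (auto simp: a_def b_def)
  have "speed y \<noteq> 0" if "y \<in> {a..b}" for y
    using speed_pos[of y] that ab by auto
  then have "continuous_on {a..b} (\<lambda>y. 1 / speed y)"
    using ab by (intro continuous_intros continuous_on_subset[OF speed_cont]) auto
  then have "((\<lambda>y. integral {y..b} (\<lambda>y. 1 / speed y)) has_real_derivative - (1 / speed x)) (at x)"
    using integral_has_real_derivative'[of a b _ x] at_within_interior[of x "{a..b}"] ab by auto
  then have "((\<lambda>y. integral {y..b} (\<lambda>y. 1 / speed y) + integral {b..1} (\<lambda>y. 1 / speed y))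
      has_real_derivative - (1 / speed x)) (at x)"
    by (auto intro!: derivative_eq_intros)
  then show ?thesis
  proof (rule has_field_derivative_transform_within_open[where S = "{a<..<b}"])
    fix y assume "y \<in> {a<..<b}"
    then show "integral {y..b} (\<lambda>y. 1 / speed y) + integral {b..1} (\<lambda>y. 1 / speed y) = quad y"
      unfolding quad_def using ab
      by (intro Henstock_Kurzweil_Integration.integral_combine
          integrable_on_subinterval[OF integrable_inverse_speed]) auto
  qed (use ab in auto)
qed

lemma quad_strict_antimono:
  assumes "0 \<le> x" "x < y" "y \<le> 1"
  shows "quad y < quad x"
proof (rule DERIV_neg_imp_decreasing_open[where f = quad])
  show "continuous_on {x..y} quad" by (rule continuous_on_subset[OF quad_cont]) (use assms in auto)
  show "\<exists>d. (quad has_real_derivative d) (at z) \<and> d < 0" if "x < z" "z < y" for z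
    using quad_deriv[of z] speed_pos[of z] that assms by auto
qed (use assms in auto)

lemma quad_pos: "quad 0 > 0"
  using quad_strict_antimono[of 0 1] by simp

lemma quad_range: "x \<in> {0..1} \<Longrightarrow> quad x \<in> {0..quad 0}"
  using quad_strict_antimono[of x 1] quad_strict_antimono[of 0 x]
  by (cases "x = 0"; cases "x = 1") auto

lemma quad_inj: "x \<in> {0..1} \<Longrightarrow> y \<in> {0..1} \<Longrightarrow> quad x = quad y \<Longrightarrow> x = y"
  using quad_strict_antimono[of x y] quad_strict_antimono[of y x]
  by (cases x y rule: linorder_cases) auto

lemma ex1_quad_eq:
  assumes "w \<in> {0..quad 0}"
  shows "\<exists>!x. x \<in> {0..1} \<and> quad x = w"
proof -
  obtain x where "x \<in> {0..1}" "quad x = w"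
    using IVT2'[of quad 1 w 0] quad_cont assms by auto
  then show ?thesis using quad_inj by blast
qed

text \<open>Any inverse of \<open>quad\<close> solves \<open>x' = -speed x\<close> on the closed interval, including
  the endpoints, where \<open>1 / speed\<close> blows up.\<close>
lemma
  assumes inv: "\<And>w. w \<in> {0..quad 0} \<Longrightarrow> g w \<in> {0..1} \<and> quad (g w) = w"
  shows inverse_quad_cont: "continuous_on {0..quad 0} g"
    and inverse_quad_deriv:
      "w \<in> {0..quad 0} \<Longrightarrow> (g has_real_derivative - speed (g w)) (at w within {0..quad 0})"
proof -
  have image: "quad ` {0..1} = {0..quad 0}"
  proof
    show "{0..quad 0} \<subseteq> quad ` {0..1}"
      using inv by (metis image_eqI subsetI)
  qed (use quad_range in blast)
  have "continuous_on (quad ` {0..1}) g"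
    using inv quad_range quad_inj by (intro continuous_on_inv[OF quad_cont compact_Icc]) auto
  then show cont: "continuous_on {0..quad 0} g" by (simp add: image)
  have interior: "g w \<in> {0<..<1}" if "w \<in> {0<..<quad 0}" for w
    using inv[of w] that by (cases "g w = 0"; cases "g w = 1") auto
  show "(g has_real_derivative - speed (g w)) (at w within {0..quad 0})" if "w \<in> {0..quad 0}"
  proof (rule has_real_derivative_within_Icc_of_interior[OF _ cont _ _ that])
    show "continuous_on {0..quad 0} (\<lambda>w. - speed (g w))"
      using inv by (intro continuous_intros continuous_on_compose2[OF speed_cont cont]) auto
    fix v assume v: "v \<in> {0<..<quad 0}"
    have "(g has_real_derivative inverse (- (1 / speed (g v)))) (at v)"
    proof (rule DERIV_inverse_function[where a = 0 and b = "quad 0"])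
      show "(quad has_real_derivative - (1 / speed (g v))) (at (g v))"
        using quad_deriv[OF interior[OF v]] .
      show "isCont g v" using continuous_on_interior[OF cont, of v] v by simp
    qed (use v inv speed_pos[OF interior[OF v]] in auto)
    then show "(g has_real_derivative - speed (g v)) (at v)" by simp
  qed (use quad_pos in auto)
qed

end

definition geom_sum :: "real \<Rightarrow> nat \<Rightarrow> real" where
  "geom_sum p k = (\<Sum>i<k. p ^ i)"

definition gap_poly :: "nat \<Rightarrow> real \<Rightarrow> real \<Rightarrow> real" where
  "gap_poly m p s = (\<Sum>k\<le>m. s ^ k * p ^ (m - k) * geom_sum p (Suc k))"

lemma geom_sum_Suc: "geom_sum p (Suc k) = geom_sum p k + p ^ k"
  by (simp add: geom_sum_def)

lemma geom_sum_Suc_left: "geom_sum p (Suc k) = 1 + p * geom_sum p k"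
  unfolding geom_sum_def sum.lessThan_Suc_shift by (simp add: sum_distrib_left)

lemma geom_sum_pos: "p > 0 \<Longrightarrow> k > 0 \<Longrightarrow> geom_sum p k > 0"
  unfolding geom_sum_def by (intro sum_pos) auto

lemma gap_poly_Suc:
  "gap_poly (Suc m) p s = p * gap_poly m p s + s ^ Suc m * geom_sum p (Suc (Suc m))"
  unfolding gap_poly_def sum_distrib_left
  by (simp, intro sum.cong) (auto simp: Suc_diff_le)

lemma gap_poly_pos: "p > 0 \<Longrightarrow> s > 0 \<Longrightarrow> gap_poly m p s > 0"
  unfolding gap_poly_def by (intro sum_pos) (auto intro!: mult_pos_pos geom_sum_pos)

text \<open>For \<open>m = n - 2\<close> the left-hand side is \<open>geom_sum p n * (s\<^sup>n\<^sup>-\<^sup>1 - Rden n p s)\<close>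
  (see \<open>Wf_minus_one\<close>); its roots \<open>s = 1\<close> and \<open>s = p\<close> are the values of
  \<open>1 - (1 - p) x\<close> at \<open>x = 0\<close> and \<open>x = 1\<close>.\<close>
lemma geom_sum_gap_factorization:
  "geom_sum p (m + 2) * s ^ (m + 1) - geom_sum p (m + 1) * s ^ (m + 2) - p ^ (m + 1)
     = (1 - s) * (s - p) * gap_poly m p s"
proof (induction m)
  case 0
  show ?case by (simp add: gap_poly_def geom_sum_def numeral_2_eq_2 algebra_simps power2_eq_square)
next
  case (Suc m)
  have "(1 - s) * (s - p) * gap_poly (Suc m) p s
      = p * ((1 - s) * (s - p) * gap_poly m p s)
        + (1 - s) * (s - p) * s ^ (m + 1) * geom_sum p (m + 2)"
    by (simp add: gap_poly_Suc algebra_simps)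
  also have "\<dots>
      = p * (geom_sum p (m + 2) * s ^ (m + 1) - geom_sum p (m + 1) * s ^ (m + 2) - p ^ (m + 1))
      + (1 - s) * (s - p) * s ^ (m + 1) * geom_sum p (m + 2)"
    by (simp only: Suc)
  finally show ?case
    by (simp add: geom_sum_Suc_left algebra_simps)
qed

lemma Qf_eq_geom_sum_ratio:
  assumes "p > 0" "n \<ge> 2"
  shows "Qf n p = geom_sum p (n - 1) / geom_sum p n"
proof (cases "p = 1")
  case True
  then show ?thesis using assms by (simp add: Qf_def geom_sum_def of_nat_diff)
next
  case False
  have "1 - p ^ n \<noteq> 0" using False assms power_eq_1_iff[of p n] by auto
  then show ?thesis
    using False by (simp add: Qf_def geom_sum_def sum_gp_strict divide_simps)
qed

lemma Qf_pos: "p > 0 \<Longrightarrow> n \<ge> 2 \<Longrightarrow> Qf n p > 0"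
  using geom_sum_pos[of p "n - 1"] geom_sum_pos[of p n] by (simp add: Qf_eq_geom_sum_ratio)

lemma Qf_less_one:
  assumes "p > 0" "n \<ge> 2"
  shows "Qf n p < 1"
proof -
  have "geom_sum p (n - 1) < geom_sum p n"
    using geom_sum_Suc[of p "n - 1"] assms by simp
  then show ?thesis
    using assms geom_sum_pos[of p n] by (simp add: Qf_eq_geom_sum_ratio)
qed

definition Rden :: "nat \<Rightarrow> real \<Rightarrow> real \<Rightarrow> real" where
  "Rden n p s = 1 - Qf n p + Qf n p * s ^ n"

definition Wf :: "nat \<Rightarrow> real \<Rightarrow> real \<Rightarrow> real" where
  "Wf n p s = s ^ (n - 1) / Rden n p s"

text \<open>The quotient \<open>(Rf n x p)\<^sup>2 / (x (1 - x))\<close> in closed form (\<open>Rf_eq_sqrt_Kf\<close>).\<close>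
definition Kf :: "nat \<Rightarrow> real \<Rightarrow> real \<Rightarrow> real" where
  "Kf n p x = (if p = 1 then real n - 1
     else gap_poly (n - 2) p (1 - (1 - p) * x) * (Wf n p (1 - (1 - p) * x) + 1)
            / (geom_sum p n * Rden n p (1 - (1 - p) * x)))"

lemma interpolation_pos:
  fixes p x :: real
  assumes "p > 0" "x \<in> {0..1}"
  shows "1 - (1 - p) * x > 0"
proof -
  have "(1 - x) + p * x > 0"
  proof (cases "x = 1")
    case False
    then show ?thesis using assms by (simp add: add_pos_nonneg)
  qed (use assms in simp)
  then show ?thesis by (simp add: left_diff_distrib)
qed

lemma Rden_pos: "p > 0 \<Longrightarrow> n \<ge> 2 \<Longrightarrow> s \<ge> 0 \<Longrightarrow> Rden n p s > 0"
  unfolding Rden_def using Qf_pos[of p n] Qf_less_one[of p n] by (simp add: add_pos_nonneg)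

lemma Rden_one [simp]: "Rden n p 1 = 1"
  by (simp add: Rden_def)

lemma Wf_pos: "p > 0 \<Longrightarrow> n \<ge> 2 \<Longrightarrow> s > 0 \<Longrightarrow> Wf n p s > 0"
  unfolding Wf_def using Rden_pos[of p n s] by simp

lemma Wf_minus_one:
  assumes "p > 0" "n \<ge> 2" "s \<ge> 0"
  shows "Wf n p s - 1 = (1 - s) * (s - p) * gap_poly (n - 2) p s / (geom_sum p n * Rden n p s)"
proof -
  obtain m where m: "n = m + 2" using assms(2) by (metis add.commute le_Suc_ex)
  have "geom_sum p n * (s ^ (n - 1) - Rden n p s)
      = geom_sum p n * s ^ (n - 1) - geom_sum p n
        + geom_sum p (n - 1) - geom_sum p (n - 1) * s ^ n"
    using geom_sum_pos[of p n] assms by (simp add: Rden_def Qf_eq_geom_sum_ratio field_simps)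
  also have "\<dots> = geom_sum p n * s ^ (n - 1) - geom_sum p (n - 1) * s ^ n - p ^ (n - 1)"
    using geom_sum_Suc[of p "n - 1"] assms by simp
  also have "\<dots> = (1 - s) * (s - p) * gap_poly (n - 2) p s"
    using geom_sum_gap_factorization[of p m s] by (simp add: m)
  finally have gap:
    "geom_sum p n * (s ^ (n - 1) - Rden n p s) = (1 - s) * (s - p) * gap_poly (n - 2) p s" .
  have "Wf n p s - 1 = geom_sum p n * (s ^ (n - 1) - Rden n p s) / (geom_sum p n * Rden n p s)"
    using Rden_pos[of p n s] geom_sum_pos[of p n] assms by (simp add: Wf_def field_simps)
  then show ?thesis by (simp only: gap)
qed

lemma Wf_sq_minus_one:
  assumes p: "p > 0" and n: "n \<ge> 2" and x: "x \<in> {0..1}"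
  shows "Wf n p (1 - (1 - p) * x) ^ 2 - 1 = (1 - p) ^ 2 * (x * (1 - x) * Kf n p x)"
proof (cases "p = 1")
  case True
  then show ?thesis by (simp add: Wf_def)
next
  case False
  define s where "s = 1 - (1 - p) * x"
  have s: "s > 0" using interpolation_pos[OF p x] by (simp add: s_def)
  have "(1 - s) * (s - p) = (1 - p) ^ 2 * (x * (1 - x))"
    by (simp add: s_def algebra_simps power2_eq_square)
  then have "Wf n p s - 1
      = (1 - p) ^ 2 * (x * (1 - x)) * gap_poly (n - 2) p s / (geom_sum p n * Rden n p s)"
    using Wf_minus_one[OF p n, of s] s by simp
  moreover have "Wf n p s ^ 2 - 1 = (Wf n p s - 1) * (Wf n p s + 1)"
    by (simp add: power2_eq_square algebra_simps)
  ultimately have "Wf n p s ^ 2 - 1 = (1 - p) ^ 2 * (x * (1 - x))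
      * (gap_poly (n - 2) p s * (Wf n p s + 1) / (geom_sum p n * Rden n p s))"
    by (simp add: mult_ac)
  then show ?thesis using False by (simp add: Kf_def s_def)
qed

lemma Kf_pos:
  assumes p: "p > 0" and n: "n \<ge> 2" and x: "x \<in> {0..1}"
  shows "Kf n p x > 0"
proof (cases "p = 1")
  case False
  define s where "s = 1 - (1 - p) * x"
  have s: "s > 0" using interpolation_pos[OF p x] by (simp add: s_def)
  then show ?thesis
    using False gap_poly_pos[OF p s] Wf_pos[OF p n s] geom_sum_pos[of p n] Rden_pos[of p n s] p n
    by (simp add: Kf_def s_def[symmetric] add_pos_pos)
qed (use n in \<open>simp add: Kf_def\<close>)

lemma Kf_cont:
  assumes p: "p > 0" and n: "n \<ge> 2"
  shows "continuous_on {0..1} (Kf n p)"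
proof (cases "p = 1")
  case False
  have nz: "1 - Qf n p + Qf n p * (1 - (1 - p) * x) ^ n \<noteq> 0" if "x \<in> {0..1}" for x
    using Rden_pos[OF p n, of "1 - (1 - p) * x"] interpolation_pos[OF p that]
    by (simp add: Rden_def)
  have "continuous_on {0..1} (\<lambda>x. gap_poly (n - 2) p (1 - (1 - p) * x)
      * (Wf n p (1 - (1 - p) * x) + 1) / (geom_sum p n * Rden n p (1 - (1 - p) * x)))"
    unfolding Wf_def Rden_def gap_poly_def
    by (intro continuous_intros) (use nz geom_sum_pos[of p n] p n in auto)
  then show ?thesis using False by (simp add: Kf_def[abs_def])
qed (simp add: Kf_def)

lemma Rf_eq_Wf: "p \<noteq> 1 \<Longrightarrow> Rf n x p = sqrt (Wf n p (1 - (1 - p) * x) ^ 2 - 1) / \<bar>1 - p\<bar>"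
  by (simp add: Rf_def Wf_def Rden_def)

lemma Rf_eq_sqrt_Kf:
  assumes p: "p > 0" and n: "n \<ge> 2" and x: "x \<in> {0..1}"
  shows "Rf n x p = sqrt (x * (1 - x) * Kf n p x)"
proof (cases "p = 1")
  case False
  then show ?thesis
    by (simp add: Rf_eq_Wf Wf_sq_minus_one[OF p n x] real_sqrt_mult)
qed (simp add: Rf_def Kf_def algebra_simps)

definition dWf :: "nat \<Rightarrow> real \<Rightarrow> real \<Rightarrow> real" where
  "dWf n p s = Wf n p s * ((real n - 1) / s - real n * Qf n p * s ^ (n - 1) / Rden n p s)"

lemma Wf_has_derivative:
  assumes p: "p > 0" and n: "n \<ge> 2" and s: "s > 0"
  shows "(Wf n p has_real_derivative dWf n p s) (at s)"
proof -
  obtain m where m: "n = Suc (Suc m)" using n by (metis add_2_eq_Suc le_Suc_ex)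
  have D: "Rden n p s > 0" using Rden_pos[OF p n] s by simp
  have "(Rden n p has_real_derivative Qf n p * (real n * s ^ (n - 1))) (at s)"
    unfolding Rden_def[abs_def] by (auto intro!: derivative_eq_intros)
  then have "((\<lambda>s. s ^ (n - 1) / Rden n p s) has_real_derivative
      (real (n - 1) * s ^ (n - 1 - Suc 0) * Rden n p s
        - Qf n p * (real n * s ^ (n - 1)) * s ^ (n - 1))
        / (Rden n p s ^ Suc (Suc 0))) (at s)"
    by (rule DERIV_quotient[OF DERIV_pow]) (use D in simp)
  then show ?thesis
    unfolding Wf_def[abs_def]
    by (rule DERIV_cong) (use D s in \<open>simp add: dWf_def Wf_def m field_simps\<close>)
qed

lemma Hcurv_Wf:
  assumes p: "p > 0" and n: "n \<ge> 2" and s: "s > 0" and a: "a > 0"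
    and v: "1 + v\<^sup>2 = (Wf n p s)\<^sup>2"
  shows "Hcurv n (a * s) v (Wf n p s * dWf n p s / a) = real n * Qf n p / a"
proof -
  have W: "Wf n p s > 0" using Wf_pos[OF p n s] .
  have "sqrt (1 + v\<^sup>2) = Wf n p s" using v W by simp
  moreover have "(1 + v\<^sup>2) powr (3/2) = Wf n p s ^ 3"
  proof -
    have "(Wf n p s ^ 2) powr (3/2) = (Wf n p s powr 2) powr (3/2)" using W by simp
    also have "\<dots> = Wf n p s ^ 3" unfolding powr_powr using W by simp
    finally show ?thesis using v by simp
  qed
  ultimately have "Hcurv n (a * s) v (Wf n p s * dWf n p s / a)
      = - (Wf n p s * dWf n p s / a) / Wf n p s ^ 3 + (real n - 1) / (a * s * Wf n p s)"
    by (simp add: Hcurv_def)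
  also have "\<dots> = real n * Qf n p * (s ^ (n - 1) / Rden n p s) / (a * Wf n p s)"
    using W s a by (simp add: dWf_def field_simps power3_eq_cube)
  also have "\<dots> = real n * Qf n p / a"
    unfolding Wf_def[symmetric] using W by simp
  finally show ?thesis .
qed

text \<open>For \<open>p = r\<close> and \<open>a = Q(r) d / (P(t) Q(t))\<close> the profile of the theorem is
  \<open>uf n d z r t = a * height (z / a)\<close>.\<close>
locale cmc_profile =
  fixes n :: nat and p :: real
  assumes n: "n \<ge> 2" and p: "p > 0"
begin

sublocale sqrt_quadrature "Kf n p"
  using Kf_cont[OF p n] Kf_pos[OF p n] by unfold_locales

lemma Rf_eq_speed: "x \<in> {0..1} \<Longrightarrow> Rf n x p = speed x"
  by (simp add: Rf_eq_sqrt_Kf[OF p n] speed_def)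

lemma zeta_eq_quad: "x \<in> {0..1} \<Longrightarrow> zeta n x p = quad x"
  unfolding zeta_def quad_def by (auto intro!: integral_cong simp: Rf_eq_speed)

lemma Pf_eq_quad: "Pf n p = quad 0"
  by (simp add: Pf_def zeta_eq_quad)

lemma
  assumes "w \<in> {0..Pf n p}"
  shows zeta_inv_mem: "zeta_inv n w p \<in> {0..1}" and quad_zeta_inv: "quad (zeta_inv n w p) = w"
proof -
  have "(0 \<le> x \<and> x \<le> 1 \<and> zeta n x p = w) = (x \<in> {0..1} \<and> quad x = w)" for x
    by (auto simp: zeta_eq_quad)
  then have "\<exists>!x. 0 \<le> x \<and> x \<le> 1 \<and> zeta n x p = w"
    using ex1_quad_eq[of w] assms by (simp only: Pf_eq_quad)
  then have "0 \<le> zeta_inv n w p \<and> zeta_inv n w p \<le> 1 \<and> zeta n (zeta_inv n w p) p = w"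
    unfolding zeta_inv_def by (rule theI')
  then show "zeta_inv n w p \<in> {0..1}" and "quad (zeta_inv n w p) = w"
    by (auto simp: zeta_eq_quad)
qed

lemma Pf_pos: "Pf n p > 0"
  using quad_pos by (simp add: Pf_eq_quad)

lemma zeta_inv_0: "zeta_inv n 0 p = 1"
  using zeta_inv_mem[of 0] quad_zeta_inv[of 0] Pf_pos quad_inj[of _ 1] by simp

lemma zeta_inv_Pf: "zeta_inv n (Pf n p) p = 0"
  using zeta_inv_mem[of "Pf n p"] quad_zeta_inv[of "Pf n p"] Pf_pos quad_inj[of _ 0]
  by (simp add: Pf_eq_quad)

lemma zeta_inv_interior:
  assumes "w \<in> {0<..<Pf n p}"
  shows "zeta_inv n w p \<in> {0<..<1}"
  using zeta_inv_mem[of w] quad_zeta_inv[of w] assms by (fastforce simp: Pf_eq_quad less_le)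

lemma zeta_inv_cont: "continuous_on {0..Pf n p} (\<lambda>w. zeta_inv n w p)"
  using inverse_quad_cont[of "\<lambda>w. zeta_inv n w p"] zeta_inv_mem quad_zeta_inv
  by (simp add: Pf_eq_quad)

lemma zeta_inv_deriv:
  "w \<in> {0..Pf n p} \<Longrightarrow>
    ((\<lambda>w. zeta_inv n w p) has_real_derivative - speed (zeta_inv n w p)) (at w within {0..Pf n p})"
  using inverse_quad_deriv[of "\<lambda>w. zeta_inv n w p"] zeta_inv_mem quad_zeta_inv
  by (simp add: Pf_eq_quad)

definition height :: "real \<Rightarrow> real" where
  "height w = 1 - (1 - p) * zeta_inv n w p"

definition slope :: "real \<Rightarrow> real" where
  "slope w = (1 - p) * Rf n (zeta_inv n w p) p"

definition bend :: "real \<Rightarrow> real" where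
  "bend w = Wf n p (height w) * dWf n p (height w)"

lemma height_pos: "w \<in> {0..Pf n p} \<Longrightarrow> height w > 0"
  using interpolation_pos[OF p zeta_inv_mem] by (simp add: height_def)

lemma height_deriv:
  assumes "w \<in> {0..Pf n p}"
  shows "(height has_real_derivative slope w) (at w within {0..Pf n p})"
  using zeta_inv_deriv[OF assms] zeta_inv_mem[OF assms] unfolding height_def[abs_def] slope_def
  by (auto intro!: derivative_eq_intros simp: Rf_eq_speed)

lemma slope_sq:
  assumes "w \<in> {0..Pf n p}"
  shows "1 + (slope w)\<^sup>2 = (Wf n p (height w))\<^sup>2"
  using Wf_sq_minus_one[OF p n zeta_inv_mem[OF assms]] Kf_pos[OF p n zeta_inv_mem[OF assms]]
    zeta_inv_mem[OF assms]
  by (simp add: slope_def height_def Rf_eq_sqrt_Kf[OF p n] power_mult_distrib)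

lemma slope_0: "slope 0 = 0" and slope_Pf: "slope (Pf n p) = 0"
  by (simp_all add: slope_def zeta_inv_0 zeta_inv_Pf Rf_eq_speed)

lemma bend_cont: "continuous_on {0..Pf n p} bend"
proof -
  have "continuous_on {0..Pf n p} height"
    unfolding height_def[abs_def] by (intro continuous_intros zeta_inv_cont)
  moreover have "height w \<noteq> 0 \<and> 1 - Qf n p + Qf n p * height w ^ n \<noteq> 0" if "w \<in> {0..Pf n p}" for w
    using Rden_pos[OF p n, of "height w"] height_pos[OF that] by (simp add: Rden_def)
  ultimately show ?thesis
    unfolding bend_def[abs_def] dWf_def Wf_def[abs_def] Rden_def
    by (intro continuous_intros) auto
qed

lemma slope_cont: "continuous_on {0..Pf n p} slope"
proof -
  have "continuous_on {0..Pf n p} (\<lambda>w. (1 - p) * speed (zeta_inv n w p))"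
    using zeta_inv_mem
    by (intro continuous_intros continuous_on_compose2[OF speed_cont zeta_inv_cont]) auto
  then show ?thesis
    by (rule continuous_on_eq) (simp add: slope_def Rf_eq_speed[OF zeta_inv_mem])
qed

text \<open>\<open>height\<close> solves the autonomous equation \<open>h' = c sqrt (Wf(h)\<^sup>2 - 1)\<close> with
  \<open>c = sgn (1 - p)\<close>, so differentiating once more gives \<open>h'' = Wf(h) Wf'(h)\<close>.\<close>
lemma slope_deriv_interior:
  assumes p1: "p \<noteq> 1" and v: "v \<in> {0<..<Pf n p}"
  shows "(slope has_real_derivative bend v) (at v)"
proof -
  define c where "c = (1 - p) / \<bar>1 - p\<bar>"
  define G where "G s = (Wf n p s)\<^sup>2 - 1" for s
  have c: "c\<^sup>2 = 1" using p1 by (simp add: c_def power_divide)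
  have slope_eq: "slope = (\<lambda>v. c * sqrt (G (height v)))"
    using p1 by (simp add: fun_eq_iff slope_def c_def G_def height_def Rf_eq_Wf)
  have x: "zeta_inv n v p \<in> {0<..<1}" using zeta_inv_interior[OF v] .
  have hv: "height v > 0" using height_pos v by simp
  have "(height has_real_derivative c * sqrt (G (height v))) (at v)"
    using height_deriv[of v] v at_within_interior[of v "{0..Pf n p}"] by (simp add: slope_eq)
  moreover have "(G has_real_derivative 2 * bend v) (at (height v))"
    unfolding G_def[abs_def] bend_def
    by (auto intro!: derivative_eq_intros Wf_has_derivative[OF p n hv])
  moreover have "G (height v) > 0"
    using Wf_sq_minus_one[OF p n, of "zeta_inv n v p"] Kf_pos[OF p n, of "zeta_inv n v p"] x p1
    by (simp add: G_def height_def)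
  ultimately have "((\<lambda>v. c * sqrt (G (height v))) has_real_derivative 2 * bend v / 2) (at v)"
    using c by (rule DERIV_sqrt_autonomous)
  then show ?thesis by (simp add: slope_eq)
qed

lemma slope_deriv:
  assumes w: "w \<in> {0..Pf n p}"
  shows "(slope has_real_derivative bend w) (at w within {0..Pf n p})"
proof (cases "p = 1")
  case True
  have "bend w = 0"
    unfolding bend_def height_def dWf_def Wf_def Qf_def using True n by simp
  moreover have "slope = (\<lambda>_. 0)"
    unfolding slope_def[abs_def] using True by simp
  ultimately show ?thesis by simp
next
  case False
  then show ?thesis
    using has_real_derivative_within_Icc_of_interior[OF _ slope_cont bend_cont _ w]
      slope_deriv_interior Pf_pos by simp
qed

lemma rescaled_profile_cmc:
  assumes a: "a > 0"
  shows "\<exists>u1 u2 :: real \<Rightarrow> real.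
      continuous_on {0..a * Pf n p} u2 \<and>
      (\<forall>z\<in>{0..a * Pf n p}.
         a * height (z / a) > 0 \<and>
         ((\<lambda>z. a * height (z / a)) has_real_derivative u1 z) (at z within {0..a * Pf n p}) \<and>
         (u1 has_real_derivative u2 z) (at z within {0..a * Pf n p}) \<and>
         Hcurv n (a * height (z / a)) (u1 z) (u2 z) = real n * Qf n p / a) \<and>
      u1 0 = 0 \<and> u1 (a * Pf n p) = 0"
proof (rule exI[of _ "\<lambda>z. slope (z / a)"], rule exI[of _ "\<lambda>z. bend (z / a) / a"],
    intro conjI ballI)
  have scaled: "z / a \<in> {0..Pf n p}" if "z \<in> {0..a * Pf n p}" for z
    using that a by (auto simp: field_simps)
  then show "continuous_on {0..a * Pf n p} (\<lambda>z. bend (z / a) / a)"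
    by (intro continuous_intros continuous_on_compose2[OF bend_cont]) (use a in auto)
  fix z assume "z \<in> {0..a * Pf n p}"
  then have z: "z / a \<in> {0..Pf n p}" by (rule scaled)
  show "a * height (z / a) > 0"
    using height_pos[OF z] a by simp
  show "((\<lambda>z. a * height (z / a)) has_real_derivative slope (z / a)) (at z within {0..a * Pf n p})"
    using DERIV_cmult[OF DERIV_comp_divide_Icc[OF a height_deriv[OF z]], of a] a by simp
  show "((\<lambda>z. slope (z / a)) has_real_derivative bend (z / a) / a) (at z within {0..a * Pf n p})"
    using DERIV_comp_divide_Icc[OF a slope_deriv[OF z]] .
  show "Hcurv n (a * height (z / a)) (slope (z / a)) (bend (z / a) / a) = real n * Qf n p / a"
    using Hcurv_Wf[OF p n height_pos[OF z] a slope_sq[OF z]] by (simp add: bend_def)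
qed (use a in \<open>simp_all add: slope_0 slope_Pf\<close>)

end

theorem proposition2p1:
  fixes n :: nat and d r t :: real
  assumes "n \<ge> 2" and "d > 0" and "r > 0" and "t > 0"
  shows "let L = Qf n r * Pf n r * d / (Qf n t * Pf n t) in
    \<exists>u1 u2 :: real \<Rightarrow> real.
      continuous_on {0..L} u2 \<and>
      (\<forall>z\<in>{0..L}.
         uf n d z r t > 0 \<and>
         ((\<lambda>w. uf n d w r t) has_real_derivative u1 z) (at z within {0..L}) \<and>
         (u1 has_real_derivative u2 z) (at z within {0..L}) \<and>
         Hcurv n (uf n d z r t) (u1 z) (u2 z) = eta n d t) \<and>
      u1 0 = 0 \<and> u1 L = 0"
proof -
  interpret r: cmc_profile n r using assms by unfold_locales
  interpret t: cmc_profile n t using assms by unfold_locales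
  define a where "a = Qf n r * d / (Pf n t * Qf n t)"
  have a: "a > 0"
    using assms Qf_pos[of r n] Qf_pos[of t n] t.Pf_pos by (simp add: a_def)
  have "Qf n r * Pf n r * d / (Qf n t * Pf n t) = a * Pf n r"
    by (simp add: a_def mult_ac)
  moreover have "uf n d z r t = a * r.height (z / a)" for z
    using a by (simp add: uf_def a_def r.height_def field_simps)
  moreover have "eta n d t = real n * Qf n r / a"
    using a Qf_pos[of r n] assms by (simp add: eta_def a_def field_simps)
  ultimately show ?thesis
    using r.rescaled_profile_cmc[OF a] by (simp add: Let_def)
qed

end
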